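(* Let $q \geq 1$ and let $k$ be a positive integer with $k < n$. Let $\boldsymbol{B}$ be a dictionary as described in the context, and assume that every signal $\boldsymbol{y} \in \mathbb{R}^D$ that admits a $k$-block-sparse representation admits a unique one. If $$\sqrt{\frac{1+\sigma_q}{1+\epsilon_q}}\;\zeta_k + \zeta_{k-1} < \frac{1-\epsilon_q}{1+\epsilon_q},$$ then for every $\Lambda_k \subseteq \{1,\dots,n\}$ with $|\Lambda_k| = k$ and every $\boldsymbol{y} \in \bigoplus_{i\in\Lambda_k}\mathcal{S}_i$, every optimal solution $\boldsymbol{c}^*$ of $P_{\ell_q/\ell_1}(\boldsymbol{y})$ satisfies $\boldsymbol{c}^*[i] = \boldsymbol{0}$ for all $i \notin \Lambda_k$; i.e. the solution of $P_{\ell_q/\ell_1}$ is equivalent to that of $P_{\ell_q/\ell_0}$.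
   Context: $\boldsymbol{B} = [\boldsymbol{B}[1]\ \cdots\ \boldsymbol{B}[n]] \in \mathbb{R}^{D\times N}$ has unit-Euclidean-norm columns, blocks $\boldsymbol{B}[i] \in \mathbb{R}^{D\times m_i}$ (possibly with linearly dependent columns); $\mathcal{S}_i = \operatorname{span}(\boldsymbol{B}[i])$ has dimension $d_i$, and $\mathcal{S}_i\cap\mathcal{S}_j = \{0\}$ for $i\ne j$. Vectors $\boldsymbol{c}\in\mathbb{R}^N$ are written $(\boldsymbol{c}[1];\dots;\boldsymbol{c}[n])$, $\boldsymbol{c}[i]\in\mathbb{R}^{m_i}$. A $k$-block-sparse representation of $\boldsymbol{y}$ is $\boldsymbol{y}=\sum_{i\in\Lambda}\boldsymbol{s}_i$ with $|\Lambda|\le k$, $\boldsymbol{s}_i\in\mathcal{S}_i\setminus\{0\}$; uniqueness means any two have the same $\Lambda$ and the same $\boldsymbol{s}_i$. $P_{\ell_q/\ell_1}(\boldsymbol{y})$: $\min \sum_i \|\boldsymbol{c}[i]\|_q$ s.t. $\boldsymbol{y}=\boldsymbol{B}\boldsymbol{c}$; $P_{\ell_q/\ell_0}(\boldsymbol{y})$: minimize the number of nonzero blocks $\boldsymbol{c}[i]$ s.t. $\boldsymbol{y}=\boldsymbol{B}\boldsymbol{c}$. Subspace coherence: $\mu(\mathcal{S}_i,\mathcal{S}_j)=\max_{0\ne\boldsymbol{x}\in\mathcal{S}_i,\,0\ne\boldsymbol{z}\in\mathcal{S}_j}\frac{|\boldsymbol{x}^\top\boldsymbol{z}|}{\|\boldsymbol{x}\|_2\|\boldsymbol{z}\|_2}$.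 $k$-cumulative subspace coherence: $\zeta_k = \max_{\Lambda_k}\max_{i\notin\Lambda_k}\sum_{j\in\Lambda_k}\mu(\mathcal{S}_i,\mathcal{S}_j)$, the outer max over all $k$-element subsets $\Lambda_k\subseteq\{1,\dots,n\}$, with $\zeta_0 = 0$. Intra-block $q$-restricted isometry constant $\epsilon_q$: the smallest constant such that for every $i$ there is a full column-rank submatrix $\bar{\boldsymbol{B}}[i]\in\mathbb{R}^{D\times d_i}$ of $\boldsymbol{B}[i]$ with $(1-\epsilon_q)\|\bar{\boldsymbol{c}}\|_q^2 \le \|\bar{\boldsymbol{B}}[i]\bar{\boldsymbol{c}}\|_2^2 \le (1+\epsilon_q)\|\bar{\boldsymbol{c}}\|_q^2$ for all $\bar{\boldsymbol{c}}\in\mathbb{R}^{d_i}$. Upper intra-block $q$-restricted isometry constant $\sigma_q$: the smallest constant such that $\|\boldsymbol{B}[i]\boldsymbol{c}[i]\|_2^2\le(1+\sigma_q)\|\boldsymbol{c}[i]\|_q^2$ for all $i$ and all $\boldsymbol{c}[i]$. *)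

theory Defs
  imports "HOL-Analysis.Analysis"
begin

text \<open>Dictionary: n blocks; block i (i < n) has m i columns b i j (j < m i),
  each a vector of the ambient space 'a (playing the role of R^D).
  Coefficient vectors c are functions c i j; block c[i] is (\<lambda>j. c i j) on j < m i.\<close>

definition lq_norm :: "real \<Rightarrow> nat \<Rightarrow> (nat \<Rightarrow> real) \<Rightarrow> real" where
  "lq_norm q mm v = (\<Sum>j<mm. \<bar>v j\<bar> powr q) powr (1 / q)"

definition lq_norm_on :: "real \<Rightarrow> nat set \<Rightarrow> (nat \<Rightarrow> real) \<Rightarrow> real" where
  "lq_norm_on q J v = (\<Sum>j\<in>J. \<bar>v j\<bar> powr q) powr (1 / q)"

definition blk_subspace :: "(nat \<Rightarrow> nat \<Rightarrow> 'a::euclidean_space) \<Rightarrow> (nat \<Rightarrow> nat) \<Rightarrow> nat \<Rightarrow> 'a set" where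
  "blk_subspace b m i = span {b i j | j. j < m i}"

definition dict_mult :: "(nat \<Rightarrow> nat \<Rightarrow> 'a::euclidean_space) \<Rightarrow> (nat \<Rightarrow> nat) \<Rightarrow> nat \<Rightarrow> (nat \<Rightarrow> nat \<Rightarrow> real) \<Rightarrow> 'a" where
  "dict_mult b m n c = (\<Sum>i<n. \<Sum>j<m i. c i j *\<^sub>R b i j)"

definition mixed_norm :: "real \<Rightarrow> (nat \<Rightarrow> nat) \<Rightarrow> nat \<Rightarrow> (nat \<Rightarrow> nat \<Rightarrow> real) \<Rightarrow> real" where
  "mixed_norm q m n c = (\<Sum>i<n. lq_norm q (m i) (c i))"

definition optimal_lq_l1 :: "real \<Rightarrow> (nat \<Rightarrow> nat \<Rightarrow> 'a::euclidean_space) \<Rightarrow> (nat \<Rightarrow> nat) \<Rightarrow> nat \<Rightarrow> 'a \<Rightarrow> (nat \<Rightarrow> nat \<Rightarrow> real) \<Rightarrow> bool" where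
  "optimal_lq_l1 q b m n y c \<longleftrightarrow> y = dict_mult b m n c \<and>
     (\<forall>c'. y = dict_mult b m n c' \<longrightarrow> mixed_norm q m n c \<le> mixed_norm q m n c')"

definition sub_coh :: "(nat \<Rightarrow> nat \<Rightarrow> 'a::euclidean_space) \<Rightarrow> (nat \<Rightarrow> nat) \<Rightarrow> nat \<Rightarrow> nat \<Rightarrow> real" where
  "sub_coh b m i j = Sup {\<bar>x \<bullet> z\<bar> / (norm x * norm z) | x z.
      x \<in> blk_subspace b m i \<and> x \<noteq> 0 \<and> z \<in> blk_subspace b m j \<and> z \<noteq> 0}"

definition cum_coh :: "(nat \<Rightarrow> nat \<Rightarrow> 'a::euclidean_space) \<Rightarrow> (nat \<Rightarrow> nat) \<Rightarrow> nat \<Rightarrow> nat \<Rightarrow> real" where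
  "cum_coh b m n k = (if k = 0 then 0 else
     Max {\<Sum>j\<in>L. sub_coh b m i j | L i. L \<subseteq> {..<n} \<and> card L = k \<and> i < n \<and> i \<notin> L})"

definition intra_rip_ok :: "real \<Rightarrow> (nat \<Rightarrow> nat \<Rightarrow> 'a::euclidean_space) \<Rightarrow> (nat \<Rightarrow> nat) \<Rightarrow> nat \<Rightarrow> real \<Rightarrow> bool" where
  "intra_rip_ok q b m n e \<longleftrightarrow> (\<forall>i<n. \<exists>J. J \<subseteq> {..<m i} \<and> card J = dim (blk_subspace b m i) \<and>
      (\<forall>c. (\<Sum>j\<in>J. c j *\<^sub>R b i j) = 0 \<longrightarrow> (\<forall>j\<in>J. c j = 0)) \<and>
      (\<forall>c. (1 - e) * (lq_norm_on q J c)\<^sup>2 \<le> (norm (\<Sum>j\<in>J. c j *\<^sub>R b i j))\<^sup>2 \<and>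
           (norm (\<Sum>j\<in>J. c j *\<^sub>R b i j))\<^sup>2 \<le> (1 + e) * (lq_norm_on q J c)\<^sup>2))"

definition intra_rip :: "real \<Rightarrow> (nat \<Rightarrow> nat \<Rightarrow> 'a::euclidean_space) \<Rightarrow> (nat \<Rightarrow> nat) \<Rightarrow> nat \<Rightarrow> real" where
  "intra_rip q b m n = Inf {e. intra_rip_ok q b m n e}"

definition upper_intra_rip :: "real \<Rightarrow> (nat \<Rightarrow> nat \<Rightarrow> 'a::euclidean_space) \<Rightarrow> (nat \<Rightarrow> nat) \<Rightarrow> nat \<Rightarrow> real" where
  "upper_intra_rip q b m n = Inf {s. \<forall>i<n. \<forall>c.
      (norm (\<Sum>j<m i. c j *\<^sub>R b i j))\<^sup>2 \<le> (1 + s) * (lq_norm q (m i) c)\<^sup>2}"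

definition block_sparse_rep :: "(nat \<Rightarrow> nat \<Rightarrow> 'a::euclidean_space) \<Rightarrow> (nat \<Rightarrow> nat) \<Rightarrow> nat \<Rightarrow> nat \<Rightarrow> 'a \<Rightarrow> nat set \<Rightarrow> (nat \<Rightarrow> 'a) \<Rightarrow> bool" where
  "block_sparse_rep b m n k y L s \<longleftrightarrow> L \<subseteq> {..<n} \<and> card L \<le> k \<and>
     (\<forall>i\<in>L. s i \<in> blk_subspace b m i \<and> s i \<noteq> 0) \<and> y = (\<Sum>i\<in>L. s i)"

definition unique_block_sparse :: "(nat \<Rightarrow> nat \<Rightarrow> 'a::euclidean_space) \<Rightarrow> (nat \<Rightarrow> nat) \<Rightarrow> nat \<Rightarrow> nat \<Rightarrow> bool" where
  "unique_block_sparse b m n k \<longleftrightarrow> (\<forall>y L s L' s'. block_sparse_rep b m n k y L s \<and>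
      block_sparse_rep b m n k y L' s' \<longrightarrow> L = L' \<and> (\<forall>i\<in>L. s i = s' i))"

end

theory Submission
  imports Defs
begin

text \<open>Suppose an optimal \<open>c\<close> puts \<open>\<ell>\<^sub>q\<close>-mass \<open>C > 0\<close> on the blocks outside \<open>\<Lambda>\<close>, and let
  \<open>r\<^sub>i = x\<^sub>i - B[i] c[i]\<close> for \<open>i \<in> \<Lambda>\<close>. The part of \<open>B c\<close> carried by the blocks outside \<open>\<Lambda>\<close> then
  equals \<open>\<Sum> r\<^sub>i\<close>; taking the inner product of this identity with each \<open>r\<^sub>i\<close> and bounding
  inner products across blocks by subspace coherences gives
  \<open>(1 - \<zeta>\<^sub>k\<^sub>-\<^sub>1) \<Sum> \<parallel>r\<^sub>i\<parallel> \<le> \<zeta>\<^sub>k \<surd>(1 + \<sigma>\<^sub>q) C\<close>.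
  Conversely, expanding each \<open>r\<^sub>i\<close> in a well-conditioned basis of \<open>S\<^sub>i\<close> and adding these
  coefficients to \<open>c\<close> on \<open>\<Lambda>\<close> gives a feasible competitor, so optimality and Minkowski's
  inequality yield \<open>\<surd>(1 - e) C \<le> \<Sum> \<parallel>r\<^sub>i\<parallel>\<close> for every admissible intra-block constant \<open>e\<close>.
  Hence \<open>(1 - e) (1 - \<zeta>\<^sub>k\<^sub>-\<^sub>1)\<^sup>2 \<le> (1 + \<sigma>\<^sub>q) \<zeta>\<^sub>k\<^sup>2\<close> for all such \<open>e\<close>, thus also for their
  infimum \<open>\<epsilon>\<^sub>q\<close>, which contradicts the hypothesis.\<close>

section \<open>\<open>\<ell>\<^sub>q\<close> norms\<close>

lemma lq_norm_eq_lq_norm_on: "lq_norm q mm v = lq_norm_on q {..<mm} v"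
  by (simp add: lq_norm_def lq_norm_on_def)

lemma lq_norm_on_nonneg: "0 \<le> lq_norm_on q J v"
  by (simp add: lq_norm_on_def)

lemma lq_norm_on_powr:
  assumes "q > 0"
  shows "lq_norm_on q J v powr q = (\<Sum>j\<in>J. \<bar>v j\<bar> powr q)"
  using assms by (simp add: lq_norm_on_def powr_powr sum_nonneg)

lemma lq_norm_on_eq_0_iff:
  assumes "finite J" "q > 0"
  shows "lq_norm_on q J v = 0 \<longleftrightarrow> (\<forall>j\<in>J. v j = 0)"
  using assms by (simp add: lq_norm_on_def sum_nonneg_eq_0_iff)

lemma abs_le_lq_norm_on:
  assumes "finite J" "q > 0" "j \<in> J"
  shows "\<bar>v j\<bar> \<le> lq_norm_on q J v"
proof -
  have "\<bar>v j\<bar> = (\<bar>v j\<bar> powr q) powr (1/q)"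
    using assms by (simp add: powr_powr)
  also have "\<dots> \<le> (\<Sum>j\<in>J. \<bar>v j\<bar> powr q) powr (1/q)"
    using assms by (intro powr_mono2 member_le_sum) auto
  finally show ?thesis
    by (simp add: lq_norm_on_def)
qed

lemma powr_convex_nonneg:
  fixes a b t q :: real
  assumes "0 \<le> a" "0 \<le> b" "0 \<le> t" "t \<le> 1" "q \<ge> 1"
  shows "(t * a + (1 - t) * b) powr q \<le> t * a powr q + (1 - t) * b powr q"
proof -
  have powr_le: "x powr q \<le> x" if "0 \<le> x" "x \<le> 1" for x :: real
    using powr_mono'[of 1 q x] that assms by simp
  consider "a = 0" | "b = 0" | "a > 0" "b > 0"
    using assms by linarith
  then show ?thesis
  proof cases
    case 1
    then show ?thesis
      using powr_le[of "1 - t"] assms by (simp add: powr_mult mult_right_mono)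
  next
    case 2
    then show ?thesis
      using powr_le[of t] assms by (simp add: powr_mult mult_right_mono)
  next
    case 3
    then show ?thesis
      using convex_onD[OF powr_convex[OF \<open>q \<ge> 1\<close>], of "1 - t" a b] assms
      by (simp add: algebra_simps)
  qed
qed

lemma abs_powr_convex:
  fixes x y t q :: real
  assumes "0 \<le> t" "t \<le> 1" "q \<ge> 1"
  shows "\<bar>t * x + (1 - t) * y\<bar> powr q \<le> t * \<bar>x\<bar> powr q + (1 - t) * \<bar>y\<bar> powr q"
proof -
  have "\<bar>t * x + (1 - t) * y\<bar> \<le> t * \<bar>x\<bar> + (1 - t) * \<bar>y\<bar>"
    using assms abs_triangle_ineq[of "t * x" "(1 - t) * y"] by (simp add: abs_mult)
  then have "\<bar>t * x + (1 - t) * y\<bar> powr q \<le> (t * \<bar>x\<bar> + (1 - t) * \<bar>y\<bar>) powr q"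
    using assms by (intro powr_mono2) auto
  also have "\<dots> \<le> t * \<bar>x\<bar> powr q + (1 - t) * \<bar>y\<bar> powr q"
    using assms by (intro powr_convex_nonneg) auto
  finally show ?thesis .
qed

text \<open>Minkowski's inequality: write \<open>(u + w) / (a + b)\<close> as the convex combination of \<open>u / a\<close>
  and \<open>w / b\<close> with weights \<open>a / (a + b)\<close> and \<open>b / (a + b)\<close>, both of unit \<open>\<ell>\<^sub>q\<close>-norm.\<close>
lemma lq_norm_on_triangle:
  assumes J: "finite J" and q: "q \<ge> 1"
  shows "lq_norm_on q J (\<lambda>j. u j + w j) \<le> lq_norm_on q J u + lq_norm_on q J w"
proof -
  define a where "a = lq_norm_on q J u"
  define b where "b = lq_norm_on q J w"
  have q0: "q > 0" using q by simp
  consider "a = 0" | "b = 0" | "a > 0" "b > 0"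
    using lq_norm_on_nonneg unfolding a_def b_def by (metis order_le_less)
  then show ?thesis
  proof cases
    case 1
    then have "\<forall>j\<in>J. u j = 0"
      using lq_norm_on_eq_0_iff[OF J q0] unfolding a_def by blast
    then show ?thesis
      using 1 unfolding a_def lq_norm_on_def by (simp cong: sum.cong)
  next
    case 2
    then have "\<forall>j\<in>J. w j = 0"
      using lq_norm_on_eq_0_iff[OF J q0] unfolding b_def by blast
    then show ?thesis
      using 2 unfolding b_def lq_norm_on_def by (simp cong: sum.cong)
  next
    case 3
    define t where "t = a / (a + b)"
    have t: "0 \<le> t" "t \<le> 1" "1 - t = b / (a + b)"
      using 3 unfolding t_def by (auto simp: field_simps)
    have "(\<Sum>j\<in>J. \<bar>u j + w j\<bar> powr q) / (a + b) powr q
        = (\<Sum>j\<in>J. \<bar>t * (u j / a) + (1 - t) * (w j / b)\<bar> powr q)"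
      unfolding sum_divide_distrib
    proof (intro sum.cong refl)
      fix j
      have "t * (u j / a) + (1 - t) * (w j / b) = (u j + w j) / (a + b)"
        using 3 unfolding t(3) unfolding t_def by (simp add: add_divide_distrib)
      then show "\<bar>u j + w j\<bar> powr q / (a + b) powr q
          = \<bar>t * (u j / a) + (1 - t) * (w j / b)\<bar> powr q"
        using 3 by (simp add: powr_divide abs_divide)
    qed
    also have "\<dots> \<le> (\<Sum>j\<in>J. t * \<bar>u j / a\<bar> powr q + (1 - t) * \<bar>w j / b\<bar> powr q)"
      by (intro sum_mono abs_powr_convex t q)
    also have "\<dots> = t * (lq_norm_on q J u powr q / a powr q)
        + (1 - t) * (lq_norm_on q J w powr q / b powr q)"
      using 3 q0
      by (simp add: lq_norm_on_powr sum.distrib sum_distrib_left sum_divide_distrib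
          powr_divide abs_divide)
    also have "\<dots> = 1"
      using 3 t unfolding a_def b_def by simp
    finally have "(\<Sum>j\<in>J. \<bar>u j + w j\<bar> powr q) \<le> (a + b) powr q"
      using 3 by (simp add: divide_le_eq)
    then have "(\<Sum>j\<in>J. \<bar>u j + w j\<bar> powr q) powr (1/q) \<le> ((a + b) powr q) powr (1/q)"
      using q0 by (intro powr_mono2) (auto simp: sum_nonneg)
    also have "\<dots> = a + b"
      using 3 q0 by (simp add: powr_powr)
    finally show ?thesis
      unfolding lq_norm_on_def a_def b_def by simp
  qed
qed

lemma norm_sum_unit_le_lq_norm_on:
  fixes f :: "nat \<Rightarrow> 'a::real_normed_vector"
  assumes J: "finite J" and q: "q > 0" and unit: "\<forall>j\<in>J. norm (f j) = 1"
  shows "norm (\<Sum>j\<in>J. c j *\<^sub>R f j) \<le> real (card J) * lq_norm_on q J c"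
proof -
  have "norm (\<Sum>j\<in>J. c j *\<^sub>R f j) \<le> (\<Sum>j\<in>J. \<bar>c j\<bar>)"
    using norm_sum[of "\<lambda>j. c j *\<^sub>R f j" J] unit by simp
  also have "\<dots> \<le> (\<Sum>j\<in>J. lq_norm_on q J c)"
    using J q by (intro sum_mono abs_le_lq_norm_on)
  finally show ?thesis
    by simp
qed

lemma sum_indicator_scaleR:
  fixes f :: "'i \<Rightarrow> 'a::real_vector"
  assumes "finite J" "j0 \<in> J"
  shows "(\<Sum>j\<in>J. (if j = j0 then 1 else 0) *\<^sub>R f j) = f j0"
proof -
  have "(\<Sum>j\<in>J. (if j = j0 then 1 else 0) *\<^sub>R f j) = (\<Sum>j\<in>J. if j = j0 then f j else 0)"
    by (intro sum.cong) auto
  then show ?thesis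
    using assms by simp
qed

lemma lq_norm_on_indicator:
  assumes "finite J" "j0 \<in> J"
  shows "lq_norm_on q J (\<lambda>j. if j = j0 then 1 else 0) = 1"
proof -
  have "(\<Sum>j\<in>J. \<bar>if j = j0 then 1 else 0 :: real\<bar> powr q) = (\<Sum>j\<in>J. if j = j0 then 1 else 0)"
    by (intro sum.cong) auto
  then show ?thesis
    using assms by (simp add: lq_norm_on_def)
qed

section \<open>Block subspaces and their bases\<close>

lemma blk_subspace_eq_span_image: "blk_subspace b m i = span (b i ` {..<m i})"
  unfolding blk_subspace_def by (rule arg_cong[where f = span]) auto

lemma subspace_blk_subspace: "subspace (blk_subspace b m i)"
  by (simp add: blk_subspace_def)

lemma column_in_blk_subspace: "j < m i \<Longrightarrow> b i j \<in> blk_subspace b m i"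
  unfolding blk_subspace_eq_span_image by (simp add: span_base)

lemma block_comb_in_blk_subspace: "(\<Sum>j<m i. c j *\<^sub>R b i j) \<in> blk_subspace b m i"
  unfolding blk_subspace_def by (intro span_sum span_scale span_base) auto

lemma independent_image_iff:
  fixes f :: "'i \<Rightarrow> 'a::real_vector"
  assumes J: "finite J" and inj: "inj_on f J"
  shows "independent (f ` J) \<longleftrightarrow> (\<forall>c. (\<Sum>j\<in>J. c j *\<^sub>R f j) = 0 \<longrightarrow> (\<forall>j\<in>J. c j = 0))"
proof
  assume indep: "independent (f ` J)"
  show "\<forall>c. (\<Sum>j\<in>J. c j *\<^sub>R f j) = 0 \<longrightarrow> (\<forall>j\<in>J. c j = 0)"
  proof (intro allI impI ballI)
    fix c j
    assume sum0: "(\<Sum>j\<in>J. c j *\<^sub>R f j) = 0" and j: "j \<in> J"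
    define u where "u v = c (inv_into J f v)" for v
    have "(\<Sum>v\<in>f ` J. u v *\<^sub>R v) = 0"
      using sum0 inj by (simp add: sum.reindex u_def)
    then have "u (f j) = 0"
      using independentD[OF indep, of "f ` J" u "f j"] J j by simp
    then show "c j = 0"
      using inj j by (simp add: u_def)
  qed
next
  assume indexed: "\<forall>c. (\<Sum>j\<in>J. c j *\<^sub>R f j) = 0 \<longrightarrow> (\<forall>j\<in>J. c j = 0)"
  show "independent (f ` J)"
  proof
    assume "dependent (f ` J)"
    then obtain u where u: "\<exists>v\<in>f ` J. u v \<noteq> 0" "(\<Sum>v\<in>f ` J. u v *\<^sub>R v) = 0"
      using dependent_finite[OF finite_imageI[OF J]] by blast
    then have "(\<Sum>j\<in>J. u (f j) *\<^sub>R f j) = 0"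
      using inj by (simp add: sum.reindex)
    then have "\<forall>j\<in>J. u (f j) = 0"
      using indexed[rule_format, of "\<lambda>j. u (f j)"] by blast
    then show False
      using u(1) by blast
  qed
qed

lemma inj_on_if_indexed_independent:
  fixes f :: "'i \<Rightarrow> 'a::real_vector"
  assumes J: "finite J" and indep: "\<forall>c. (\<Sum>j\<in>J. c j *\<^sub>R f j) = 0 \<longrightarrow> (\<forall>j\<in>J. c j = 0)"
  shows "inj_on f J"
proof (rule inj_onI, rule ccontr)
  fix j1 j2
  assume j: "j1 \<in> J" "j2 \<in> J" "f j1 = f j2" "j1 \<noteq> j2"
  define c where "c j = (if j = j1 then 1 else 0) - (if j = j2 then 1 else 0 :: real)" for j
  have "(\<Sum>j\<in>J. c j *\<^sub>R f j)
      = (\<Sum>j\<in>J. (if j = j1 then f j else 0) - (if j = j2 then f j else 0))"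
    by (intro sum.cong) (auto simp: c_def scaleR_left_diff_distrib)
  also have "\<dots> = f j1 - f j2"
    using J j by (simp add: sum_subtractf)
  finally have "(\<Sum>j\<in>J. c j *\<^sub>R f j) = f j1 - f j2" .
  then have "c j1 = 0"
    using indep j by simp
  then show False
    using j by (simp add: c_def)
qed

lemma indexed_basis_of_blk_subspace:
  fixes b :: "nat \<Rightarrow> nat \<Rightarrow> 'a::euclidean_space"
  obtains J where "J \<subseteq> {..<m i}" "card J = dim (blk_subspace b m i)"
    "\<forall>c. (\<Sum>j\<in>J. c j *\<^sub>R b i j) = 0 \<longrightarrow> (\<forall>j\<in>J. c j = 0)"
proof -
  obtain B where B: "B \<subseteq> b i ` {..<m i}" "independent B" "b i ` {..<m i} \<subseteq> span B"
    "card B = dim (b i ` {..<m i})"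
    using basis_exists by blast
  obtain J where J: "J \<subseteq> {..<m i}" "inj_on (b i) J" "B = b i ` J"
    using B(1) subset_image_inj by metis
  have "card J = dim (blk_subspace b m i)"
    using B(4) J card_image[OF J(2)] by (simp add: blk_subspace_eq_span_image dim_span)
  moreover have "\<forall>c. (\<Sum>j\<in>J. c j *\<^sub>R b i j) = 0 \<longrightarrow> (\<forall>j\<in>J. c j = 0)"
    using independent_image_iff[of J "b i"] B(2) J finite_subset by blast
  ultimately show ?thesis
    using J(1) that by blast
qed

lemma blk_subspace_repr_on_basis:
  fixes b :: "nat \<Rightarrow> nat \<Rightarrow> 'a::euclidean_space"
  assumes J: "J \<subseteq> {..<m i}" "card J = dim (blk_subspace b m i)"
    and indexed: "\<forall>c. (\<Sum>j\<in>J. c j *\<^sub>R b i j) = 0 \<longrightarrow> (\<forall>j\<in>J. c j = 0)"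
    and s: "s \<in> blk_subspace b m i"
  obtains a where "s = (\<Sum>j\<in>J. a j *\<^sub>R b i j)"
proof -
  have fin: "finite J"
    using J(1) finite_subset by blast
  have inj: "inj_on (b i) J"
    using inj_on_if_indexed_independent[OF fin indexed] .
  have "b i ` J \<subseteq> blk_subspace b m i"
    using J(1) column_in_blk_subspace by blast
  moreover have "card (b i ` J) = dim (blk_subspace b m i)"
    using card_image[OF inj] J(2) by simp
  moreover have "independent (b i ` J)"
    using independent_image_iff[OF fin inj] indexed by blast
  ultimately have "blk_subspace b m i \<subseteq> span (b i ` J)"
    using card_eq_dim fin by blast
  then obtain u where "s = (\<Sum>v\<in>b i ` J. u v *\<^sub>R v)"
    using s span_finite[of "b i ` J"] fin by auto
  then have "s = (\<Sum>j\<in>J. u (b i j) *\<^sub>R b i j)"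
    by (simp add: sum.reindex[OF inj])
  then show ?thesis
    by (rule that)
qed

section \<open>Intra-block restricted isometry constants\<close>

lemma norm_block_sum_le:
  fixes b :: "nat \<Rightarrow> nat \<Rightarrow> 'a::euclidean_space"
  assumes q: "q > 0" and unit: "\<forall>i<n. \<forall>j<m i. norm (b i j) = 1"
    and i: "i < n" and J: "J \<subseteq> {..<m i}"
  shows "norm (\<Sum>j\<in>J. c j *\<^sub>R b i j) \<le> real (\<Sum>i<n. m i) * lq_norm_on q J c"
proof -
  have fin: "finite J"
    using J finite_subset by blast
  have "card J \<le> (\<Sum>i<n. m i)"
    using card_mono[OF _ J] member_le_sum[of i "{..<n}" m] i by simp
  have "norm (\<Sum>j\<in>J. c j *\<^sub>R b i j) \<le> real (card J) * lq_norm_on q J c"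
    using unit i J by (intro norm_sum_unit_le_lq_norm_on[OF fin q]) auto
  also have "\<dots> \<le> real (\<Sum>i<n. m i) * lq_norm_on q J c"
    using \<open>card J \<le> _\<close> by (intro mult_right_mono of_nat_mono) (simp_all add: lq_norm_on_nonneg)
  finally show ?thesis .
qed

lemma intra_rip_ok_exists:
  fixes b :: "nat \<Rightarrow> nat \<Rightarrow> 'a::euclidean_space"
  assumes q: "q > 0" and unit: "\<forall>i<n. \<forall>j<m i. norm (b i j) = 1"
  shows "intra_rip_ok q b m n (1 + (real (\<Sum>i<n. m i))\<^sup>2)"
  unfolding intra_rip_ok_def
proof (intro allI impI)
  fix i
  assume i: "i < n"
  define M where "M = real (\<Sum>i<n. m i)"
  obtain J where J: "J \<subseteq> {..<m i}" "card J = dim (blk_subspace b m i)"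
    and indexed: "\<forall>c. (\<Sum>j\<in>J. c j *\<^sub>R b i j) = 0 \<longrightarrow> (\<forall>j\<in>J. c j = 0)"
    using indexed_basis_of_blk_subspace by blast
  have bound: "(norm (\<Sum>j\<in>J. c j *\<^sub>R b i j))\<^sup>2 \<le> M\<^sup>2 * (lq_norm_on q J c)\<^sup>2" for c
    using power_mono[OF norm_block_sum_le[OF q unit i J(1), of c] norm_ge_zero, of 2]
    unfolding M_def power_mult_distrib .
  have "(1 - (1 + M\<^sup>2)) * (lq_norm_on q J c)\<^sup>2 \<le> (norm (\<Sum>j\<in>J. c j *\<^sub>R b i j))\<^sup>2 \<and>
      (norm (\<Sum>j\<in>J. c j *\<^sub>R b i j))\<^sup>2 \<le> (1 + (1 + M\<^sup>2)) * (lq_norm_on q J c)\<^sup>2" for c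
  proof -
    have "(1 - (1 + M\<^sup>2)) * (lq_norm_on q J c)\<^sup>2 \<le> 0"
      "M\<^sup>2 * (lq_norm_on q J c)\<^sup>2 \<le> (1 + (1 + M\<^sup>2)) * (lq_norm_on q J c)\<^sup>2"
      by (simp_all add: mult_right_mono)
    then show ?thesis
      using bound[of c] zero_le_power2[of "norm (\<Sum>j\<in>J. c j *\<^sub>R b i j)"] by linarith
  qed
  then show "\<exists>J. J \<subseteq> {..<m i} \<and> card J = dim (blk_subspace b m i) \<and>
      (\<forall>c. (\<Sum>j\<in>J. c j *\<^sub>R b i j) = 0 \<longrightarrow> (\<forall>j\<in>J. c j = 0)) \<and>
      (\<forall>c. (1 - (1 + (real (\<Sum>i<n. m i))\<^sup>2)) * (lq_norm_on q J c)\<^sup>2 \<le> (norm (\<Sum>j\<in>J. c j *\<^sub>R b i j))\<^sup>2 \<and>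
           (norm (\<Sum>j\<in>J. c j *\<^sub>R b i j))\<^sup>2 \<le> (1 + (1 + (real (\<Sum>i<n. m i))\<^sup>2)) * (lq_norm_on q J c)\<^sup>2)"
    using J indexed unfolding M_def by blast
qed

lemma intra_rip_okE:
  fixes b :: "nat \<Rightarrow> nat \<Rightarrow> 'a::euclidean_space"
  assumes "intra_rip_ok q b m n e" "i < n"
  obtains J where "J \<subseteq> {..<m i}" "card J = dim (blk_subspace b m i)"
    "\<forall>c. (\<Sum>j\<in>J. c j *\<^sub>R b i j) = 0 \<longrightarrow> (\<forall>j\<in>J. c j = 0)"
    "\<And>c. (1 - e) * (lq_norm_on q J c)\<^sup>2 \<le> (norm (\<Sum>j\<in>J. c j *\<^sub>R b i j))\<^sup>2"
    "\<And>c. (norm (\<Sum>j\<in>J. c j *\<^sub>R b i j))\<^sup>2 \<le> (1 + e) * (lq_norm_on q J c)\<^sup>2"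
proof -
  from assms obtain J where J: "J \<subseteq> {..<m i}" "card J = dim (blk_subspace b m i)"
    "\<forall>c. (\<Sum>j\<in>J. c j *\<^sub>R b i j) = 0 \<longrightarrow> (\<forall>j\<in>J. c j = 0)"
    and bounds: "\<forall>c. (1 - e) * (lq_norm_on q J c)\<^sup>2 \<le> (norm (\<Sum>j\<in>J. c j *\<^sub>R b i j))\<^sup>2 \<and>
      (norm (\<Sum>j\<in>J. c j *\<^sub>R b i j))\<^sup>2 \<le> (1 + e) * (lq_norm_on q J c)\<^sup>2"
    unfolding intra_rip_ok_def by (elim allE[of _ i] impE exE conjE) auto
  from that[OF J] bounds show thesis
    by simp
qed

lemma intra_rip_ok_nonneg:
  fixes b :: "nat \<Rightarrow> nat \<Rightarrow> 'a::euclidean_space"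
  assumes ok: "intra_rip_ok q b m n e" and unit: "\<forall>i<n. \<forall>j<m i. norm (b i j) = 1"
    and i: "i < n" "0 < m i"
  shows "0 \<le> e"
proof -
  obtain J where J: "J \<subseteq> {..<m i}" "card J = dim (blk_subspace b m i)"
    and upper: "\<And>c. (norm (\<Sum>j\<in>J. c j *\<^sub>R b i j))\<^sup>2 \<le> (1 + e) * (lq_norm_on q J c)\<^sup>2"
    using intra_rip_okE[OF ok i(1)] by metis
  have "norm (b i 0) = 1"
    using unit i by blast
  then have "\<not> blk_subspace b m i \<subseteq> {0}"
    using column_in_blk_subspace[of 0 m i b] i(2) by force
  then have "J \<noteq> {}"
    using J(2) dim_eq_0[of "blk_subspace b m i"] by (metis card.empty)
  then obtain j0 where j0: "j0 \<in> J"
    by blast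
  have fin: "finite J"
    using J(1) finite_subset by blast
  have "norm (b i j0) = 1"
    using unit i J(1) j0 by auto
  then show ?thesis
    using upper[of "\<lambda>j. if j = j0 then 1 else 0"]
    by (simp add: sum_indicator_scaleR[OF fin j0] lq_norm_on_indicator[OF fin j0])
qed

lemma le_intra_rip:
  fixes b :: "nat \<Rightarrow> nat \<Rightarrow> 'a::euclidean_space"
  assumes "q > 0" "\<forall>i<n. \<forall>j<m i. norm (b i j) = 1"
    and "\<And>e. intra_rip_ok q b m n e \<Longrightarrow> t \<le> e"
  shows "t \<le> intra_rip q b m n"
  unfolding intra_rip_def using intra_rip_ok_exists[OF assms(1,2)] assms(3)
  by (intro cInf_greatest) auto

lemma intra_rip_nonneg:
  fixes b :: "nat \<Rightarrow> nat \<Rightarrow> 'a::euclidean_space"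
  assumes "q > 0" "\<forall>i<n. \<forall>j<m i. norm (b i j) = 1" "i < n" "0 < m i"
  shows "0 \<le> intra_rip q b m n"
  using le_intra_rip intra_rip_ok_nonneg assms by blast

lemma intra_rip_ok_block_repr:
  fixes b :: "nat \<Rightarrow> nat \<Rightarrow> 'a::euclidean_space"
  assumes ok: "intra_rip_ok q b m n e" and i: "i < n" and s: "s \<in> blk_subspace b m i"
  obtains a where "s = (\<Sum>j<m i. a j *\<^sub>R b i j)" "(1 - e) * (lq_norm q (m i) a)\<^sup>2 \<le> (norm s)\<^sup>2"
proof -
  obtain J where J: "J \<subseteq> {..<m i}" "card J = dim (blk_subspace b m i)"
    and indexed: "\<forall>c. (\<Sum>j\<in>J. c j *\<^sub>R b i j) = 0 \<longrightarrow> (\<forall>j\<in>J. c j = 0)"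
    and lower: "\<And>c. (1 - e) * (lq_norm_on q J c)\<^sup>2 \<le> (norm (\<Sum>j\<in>J. c j *\<^sub>R b i j))\<^sup>2"
    using intra_rip_okE[OF ok i] by metis
  obtain a0 where a0: "s = (\<Sum>j\<in>J. a0 j *\<^sub>R b i j)"
    using blk_subspace_repr_on_basis[OF J indexed s] .
  define a where "a j = (if j \<in> J then a0 j else 0)" for j
  have "s = (\<Sum>j<m i. a j *\<^sub>R b i j)"
    unfolding a0 using J(1) by (intro sum.mono_neutral_cong_right[symmetric]) (auto simp: a_def)
  moreover have "lq_norm q (m i) a = lq_norm_on q J a0"
    unfolding lq_norm_def lq_norm_on_def using J(1)
    by (intro arg_cong[where f = "\<lambda>x. x powr (1 / q)"] sum.mono_neutral_cong_right) (auto simp: a_def)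
  ultimately show ?thesis
    using that lower a0 by metis
qed

lemma upper_intra_rip_bound:
  fixes b :: "nat \<Rightarrow> nat \<Rightarrow> 'a::euclidean_space"
  assumes q: "q > 0" and unit: "\<forall>i<n. \<forall>j<m i. norm (b i j) = 1" and i: "i < n"
  shows "(norm (\<Sum>j<m i. c j *\<^sub>R b i j))\<^sup>2 \<le> (1 + upper_intra_rip q b m n) * (lq_norm q (m i) c)\<^sup>2"
proof -
  define S where "S = {s. \<forall>i<n. \<forall>c.
      (norm (\<Sum>j<m i. c j *\<^sub>R b i j))\<^sup>2 \<le> (1 + s) * (lq_norm q (m i) c)\<^sup>2}"
  have "(real (\<Sum>i<n. m i))\<^sup>2 \<in> S"
    unfolding S_def
  proof (intro CollectI allI impI)
    fix i c
    assume "i < n"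
    then have "norm (\<Sum>j<m i. c j *\<^sub>R b i j) \<le> real (\<Sum>i<n. m i) * lq_norm q (m i) c"
      using norm_block_sum_le[OF q unit, of i "{..<m i}" c] by (simp add: lq_norm_eq_lq_norm_on)
    then have "(norm (\<Sum>j<m i. c j *\<^sub>R b i j))\<^sup>2 \<le> (real (\<Sum>i<n. m i))\<^sup>2 * (lq_norm q (m i) c)\<^sup>2"
      using power_mono[OF _ norm_ge_zero, of _ _ 2] by (metis power_mult_distrib)
    then show "(norm (\<Sum>j<m i. c j *\<^sub>R b i j))\<^sup>2 \<le> (1 + (real (\<Sum>i<n. m i))\<^sup>2) * (lq_norm q (m i) c)\<^sup>2"
      by (rule order_trans) (simp add: mult_right_mono)
  qed
  show ?thesis
  proof (cases "lq_norm q (m i) c = 0")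
    case True
    then show ?thesis
      using lq_norm_on_eq_0_iff[of "{..<m i}" q c] q by (simp add: lq_norm_eq_lq_norm_on)
  next
    case False
    then have pos: "0 < (lq_norm q (m i) c)\<^sup>2"
      by simp
    define r where "r = (norm (\<Sum>j<m i. c j *\<^sub>R b i j))\<^sup>2 / (lq_norm q (m i) c)\<^sup>2"
    have "r - 1 \<le> Inf S"
    proof (rule cInf_greatest)
      show "S \<noteq> {}"
        using \<open>_ \<in> S\<close> by blast
      fix s
      assume "s \<in> S"
      then have "(norm (\<Sum>j<m i. c j *\<^sub>R b i j))\<^sup>2 \<le> (1 + s) * (lq_norm q (m i) c)\<^sup>2"
        using i unfolding S_def by blast
      then have "r \<le> 1 + s"
        unfolding r_def by (simp add: pos_divide_le_eq[OF pos])
      then show "r - 1 \<le> s"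
        by simp
    qed
    then have "r \<le> 1 + upper_intra_rip q b m n"
      by (simp add: upper_intra_rip_def S_def)
    then show ?thesis
      unfolding r_def by (simp add: pos_divide_le_eq[OF pos])
  qed
qed

lemma upper_intra_rip_nonneg:
  fixes b :: "nat \<Rightarrow> nat \<Rightarrow> 'a::euclidean_space"
  assumes q: "q > 0" and unit: "\<forall>i<n. \<forall>j<m i. norm (b i j) = 1" and i: "i < n" "0 < m i"
  shows "0 \<le> upper_intra_rip q b m n"
proof -
  have "norm (b i 0) = 1"
    using unit i by blast
  then show ?thesis
    using upper_intra_rip_bound[OF q unit i(1), of "\<lambda>j. if j = 0 then 1 else 0"] i(2)
    by (simp add: sum_indicator_scaleR lq_norm_on_indicator lq_norm_eq_lq_norm_on)
qed

section \<open>Subspace coherence\<close>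

lemma abs_inner_le_sub_coh:
  fixes b :: "nat \<Rightarrow> nat \<Rightarrow> 'a::euclidean_space"
  assumes x: "x \<in> blk_subspace b m i" and z: "z \<in> blk_subspace b m j"
  shows "\<bar>x \<bullet> z\<bar> \<le> sub_coh b m i j * norm x * norm z"
proof (cases "x = 0 \<or> z = 0")
  case True
  then show ?thesis
    by auto
next
  case False
  define X where "X = {\<bar>x \<bullet> z\<bar> / (norm x * norm z) | x z.
      x \<in> blk_subspace b m i \<and> x \<noteq> 0 \<and> z \<in> blk_subspace b m j \<and> z \<noteq> 0}"
  have "bdd_above X"
    by (rule bdd_aboveI[of _ 1])
      (auto simp: X_def divide_le_eq Cauchy_Schwarz_ineq2 simp del: mult_le_cancel_right1)
  moreover have "\<bar>x \<bullet> z\<bar> / (norm x * norm z) \<in> X"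
    using x z False unfolding X_def by blast
  ultimately have "\<bar>x \<bullet> z\<bar> / (norm x * norm z) \<le> sub_coh b m i j"
    unfolding sub_coh_def X_def[symmetric] by (rule cSup_upper[rotated])
  then show ?thesis
    using False by (simp add: divide_le_eq mult.assoc)
qed

lemma sub_coh_nonneg:
  fixes b :: "nat \<Rightarrow> nat \<Rightarrow> 'a::euclidean_space"
  assumes unit: "\<forall>i<n. \<forall>j<m i. norm (b i j) = 1" and nonempty: "\<forall>i<n. 0 < m i"
    and "i < n" "j < n"
  shows "0 \<le> sub_coh b m i j"
proof -
  have "\<bar>b i 0 \<bullet> b j 0\<bar> \<le> sub_coh b m i j * norm (b i 0) * norm (b j 0)"
    using assms by (intro abs_inner_le_sub_coh column_in_blk_subspace) auto
  moreover have "norm (b i 0) = 1" "norm (b j 0) = 1"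
    using assms by auto
  ultimately have "\<bar>b i 0 \<bullet> b j 0\<bar> \<le> sub_coh b m i j"
    by simp
  then show ?thesis
    using abs_ge_zero order_trans by blast
qed

lemma sum_sub_coh_le_cum_coh:
  assumes L: "L \<subseteq> {..<n}" "card L = k" and i: "i < n" "i \<notin> L"
  shows "(\<Sum>j\<in>L. sub_coh b m i j) \<le> cum_coh b m n k"
proof (cases "k = 0")
  case True
  then have "L = {}"
    using L finite_subset by fastforce
  then show ?thesis
    using True by (simp add: cum_coh_def)
next
  case False
  define X where "X = {\<Sum>j\<in>L. sub_coh b m i j | L i. L \<subseteq> {..<n} \<and> card L = k \<and> i < n \<and> i \<notin> L}"
  have "X \<subseteq> (\<lambda>(L, i). \<Sum>j\<in>L. sub_coh b m i j) ` (Pow {..<n} \<times> {..<n})"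
    unfolding X_def by auto
  then have "finite X"
    by (rule finite_subset) auto
  moreover have "(\<Sum>j\<in>L. sub_coh b m i j) \<in> X"
    unfolding X_def using L i by blast
  ultimately show ?thesis
    using False by (simp add: cum_coh_def X_def[symmetric])
qed

lemma cum_coh_nonneg:
  assumes coh: "\<forall>i<n. \<forall>j<n. 0 \<le> sub_coh b m i j" and k: "k < n"
  shows "0 \<le> cum_coh b m n k"
proof -
  have "0 \<le> (\<Sum>j\<in>{..<k}. sub_coh b m k j)"
    using coh k by (intro sum_nonneg) auto
  also have "\<dots> \<le> cum_coh b m n k"
    using k by (intro sum_sub_coh_le_cum_coh) auto
  finally show ?thesis .
qed

lemma norm_le_sub_coh_sum:
  fixes b :: "nat \<Rightarrow> nat \<Rightarrow> 'a::euclidean_space"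
  assumes L: "finite L" "i \<in> L"
    and s: "\<forall>j\<in>L. s j \<in> blk_subspace b m j" and v: "\<forall>l\<in>R. v l \<in> blk_subspace b m l"
    and sums: "(\<Sum>l\<in>R. v l) = (\<Sum>j\<in>L. s j)"
    and coh: "\<forall>l\<in>R. 0 \<le> sub_coh b m l i" "\<forall>j\<in>L. 0 \<le> sub_coh b m j i"
  shows "norm (s i) \<le> (\<Sum>l\<in>R. sub_coh b m l i * norm (v l)) + (\<Sum>j\<in>L-{i}. sub_coh b m j i * norm (s j))"
    (is "_ \<le> ?A + ?B")
proof -
  have "(norm (s i))\<^sup>2 = s i \<bullet> (\<Sum>j\<in>L. s j) - s i \<bullet> (\<Sum>j\<in>L-{i}. s j)"
    using L by (simp add: sum.remove inner_add_right power2_norm_eq_inner)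
  also have "\<dots> = (\<Sum>l\<in>R. v l \<bullet> s i) - (\<Sum>j\<in>L-{i}. s j \<bullet> s i)"
    unfolding sums[symmetric] by (simp add: inner_sum_right inner_commute)
  also have "\<dots> \<le> (\<Sum>l\<in>R. \<bar>v l \<bullet> s i\<bar>) + (\<Sum>j\<in>L-{i}. \<bar>s j \<bullet> s i\<bar>)"
    using sum_abs[of "\<lambda>l. v l \<bullet> s i" R] sum_abs[of "\<lambda>j. s j \<bullet> s i" "L - {i}"] by linarith
  also have "\<dots> \<le> (?A + ?B) * norm (s i)"
    unfolding distrib_right sum_distrib_right
    using s v L(2) by (intro add_mono sum_mono abs_inner_le_sub_coh) auto
  finally have "norm (s i) * norm (s i) \<le> (?A + ?B) * norm (s i)"
    by (simp add: power2_eq_square)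
  moreover have "0 \<le> ?A + ?B"
    using coh by (intro add_nonneg_nonneg sum_nonneg mult_nonneg_nonneg) auto
  ultimately show ?thesis
    by (cases "norm (s i) = 0") (auto intro: mult_right_le_imp_le)
qed

lemma sum_norm_le_cum_coh:
  fixes b :: "nat \<Rightarrow> nat \<Rightarrow> 'a::euclidean_space"
  assumes L: "L \<subseteq> {..<n}" "card L = k" and R: "R \<subseteq> {..<n} - L"
    and coh: "\<forall>i<n. \<forall>j<n. 0 \<le> sub_coh b m i j"
    and s: "\<forall>j\<in>L. s j \<in> blk_subspace b m j" and v: "\<forall>l\<in>R. v l \<in> blk_subspace b m l"
    and sums: "(\<Sum>l\<in>R. v l) = (\<Sum>j\<in>L. s j)"
  shows "(\<Sum>i\<in>L. norm (s i))
    \<le> cum_coh b m n k * (\<Sum>l\<in>R. norm (v l)) + cum_coh b m n (k - 1) * (\<Sum>i\<in>L. norm (s i))"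
proof -
  have finL: "finite L"
    using L by (auto intro: finite_subset)
  have "(\<Sum>i\<in>L. norm (s i)) \<le> (\<Sum>i\<in>L. (\<Sum>l\<in>R. sub_coh b m l i * norm (v l))
      + (\<Sum>j\<in>L-{i}. sub_coh b m j i * norm (s j)))"
    using L R coh by (intro sum_mono norm_le_sub_coh_sum[OF finL _ s v sums]) auto
  also have "\<dots> = (\<Sum>l\<in>R. norm (v l) * (\<Sum>i\<in>L. sub_coh b m l i))
      + (\<Sum>j\<in>L. norm (s j) * (\<Sum>i\<in>L-{j}. sub_coh b m j i))"
    using sum.swap_restrict[OF finL finL, of "\<lambda>i j. sub_coh b m j i * norm (s j)" "\<lambda>i j. j \<noteq> i"]
    by (simp add: sum.distrib sum_distrib_left sum.swap[of _ L R] set_diff_eq mult.commute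
        eq_commute[of _ "_ :: nat"])
  also have "\<dots> \<le> (\<Sum>l\<in>R. norm (v l) * cum_coh b m n k)
      + (\<Sum>j\<in>L. norm (s j) * cum_coh b m n (k - 1))"
  proof (intro add_mono sum_mono mult_left_mono norm_ge_zero)
    show "(\<Sum>i\<in>L. sub_coh b m l i) \<le> cum_coh b m n k" if "l \<in> R" for l
      using that L R by (intro sum_sub_coh_le_cum_coh) auto
    show "(\<Sum>i\<in>L-{j}. sub_coh b m j i) \<le> cum_coh b m n (k - 1)" if "j \<in> L" for j
      using that L finL by (intro sum_sub_coh_le_cum_coh) auto
  qed
  finally show ?thesis
    unfolding sum_distrib_right[symmetric] by (simp only: mult.commute)
qed

section \<open>Recovery of the block support\<close>

lemma recovery_condition_bounds:
  fixes eps sig z z' :: real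
  assumes nonneg: "0 \<le> eps" "0 \<le> sig" "0 \<le> z" "0 \<le> z'"
    and cond: "sqrt ((1 + sig) / (1 + eps)) * z + z' < (1 - eps) / (1 + eps)"
  shows "z' < 1" "(1 + sig) * z\<^sup>2 < (1 - eps) * (1 - z')\<^sup>2"
proof -
  define u where "u = (1 - eps) / (1 + eps)"
  have "u \<le> 1"
    using nonneg by (simp add: u_def divide_le_eq)
  have zu: "sqrt ((1 + sig) / (1 + eps)) * z < u - z'"
    using cond unfolding u_def by linarith
  have lhs_nonneg: "0 \<le> sqrt ((1 + sig) / (1 + eps)) * z"
    using nonneg by simp
  then have "z' < u"
    using zu by linarith
  then show "z' < 1"
    using \<open>u \<le> 1\<close> by simp
  have "(1 + eps) * u\<^sup>2 = (1 - eps) * u"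
    using nonneg by (simp add: u_def power2_eq_square)
  also have "\<dots> \<le> 1 - eps"
  proof (rule mult_left_le[OF \<open>u \<le> 1\<close>])
    have "0 < u"
      using \<open>z' < u\<close> nonneg by linarith
    then show "0 \<le> 1 - eps"
      using nonneg by (simp add: u_def zero_less_divide_iff)
  qed
  finally have u2: "(1 + eps) * u\<^sup>2 \<le> 1 - eps" .
  have "u - z' \<le> u * (1 - z')"
    using \<open>u \<le> 1\<close> nonneg mult_right_mono[of u 1 z'] by (simp add: algebra_simps)
  then have sq_le: "(u - z')\<^sup>2 \<le> u\<^sup>2 * (1 - z')\<^sup>2"
    using \<open>z' < u\<close> by (metis power_mono power_mult_distrib diff_ge_0_iff_ge less_imp_le)
  have "(sqrt ((1 + sig) / (1 + eps)) * z)\<^sup>2 < (u - z')\<^sup>2"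
    using zu lhs_nonneg by (intro power_strict_mono) auto
  then have sq_less: "(1 + sig) / (1 + eps) * z\<^sup>2 < (u - z')\<^sup>2"
    using nonneg by (simp add: power_mult_distrib)
  have "(1 + sig) * z\<^sup>2 = (1 + eps) * ((1 + sig) / (1 + eps) * z\<^sup>2)"
    using nonneg by simp
  also have "\<dots> < (1 + eps) * (u\<^sup>2 * (1 - z')\<^sup>2)"
    using sq_less sq_le nonneg by (intro mult_strict_left_mono) auto
  also have "\<dots> \<le> (1 - eps) * (1 - z')\<^sup>2"
    using u2 by (simp add: mult.assoc[symmetric] mult_right_mono)
  finally show "(1 + sig) * z\<^sup>2 < (1 - eps) * (1 - z')\<^sup>2" .
qed

lemma norm_block_le_upper_intra_rip:
  fixes b :: "nat \<Rightarrow> nat \<Rightarrow> 'a::euclidean_space"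
  assumes "q > 0" "\<forall>i<n. \<forall>j<m i. norm (b i j) = 1" "i < n"
  shows "norm (\<Sum>j<m i. c j *\<^sub>R b i j) \<le> sqrt (1 + upper_intra_rip q b m n) * lq_norm q (m i) c"
proof -
  have "norm (\<Sum>j<m i. c j *\<^sub>R b i j) = sqrt ((norm (\<Sum>j<m i. c j *\<^sub>R b i j))\<^sup>2)"
    by simp
  also have "\<dots> \<le> sqrt ((1 + upper_intra_rip q b m n) * (lq_norm q (m i) c)\<^sup>2)"
    using upper_intra_rip_bound[OF assms] by (rule real_sqrt_le_mono)
  also have "\<dots> = sqrt (1 + upper_intra_rip q b m n) * lq_norm q (m i) c"
    by (simp add: real_sqrt_mult lq_norm_eq_lq_norm_on lq_norm_on_nonneg)
  finally show ?thesis .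
qed

lemma optimal_off_support_le_correction:
  fixes b :: "nat \<Rightarrow> nat \<Rightarrow> 'a::euclidean_space"
  assumes q: "q \<ge> 1" and opt: "optimal_lq_l1 q b m n y c" and L: "L \<subseteq> {..<n}"
    and y: "y = (\<Sum>i\<in>L. \<Sum>j<m i. (c i j + a i j) *\<^sub>R b i j)"
  shows "(\<Sum>l\<in>{..<n}-L. lq_norm q (m l) (c l)) \<le> (\<Sum>i\<in>L. lq_norm q (m i) (a i))"
proof -
  define c' where "c' i j = (if i \<in> L then c i j + a i j else 0)" for i j
  have restrict: "(\<Sum>i<n. if i \<in> L then f i else 0) = (\<Sum>i\<in>L. f i)" for f :: "nat \<Rightarrow> 'b::comm_monoid_add"
    using L by (simp add: sum.inter_restrict[symmetric] Int_absorb1)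
  have "y = dict_mult b m n c'"
    unfolding dict_mult_def y restrict[symmetric] by (intro sum.cong) (auto simp: c'_def)
  then have "mixed_norm q m n c \<le> mixed_norm q m n c'"
    using opt by (simp add: optimal_lq_l1_def)
  also have "mixed_norm q m n c' = (\<Sum>i\<in>L. lq_norm q (m i) (\<lambda>j. c i j + a i j))"
    unfolding mixed_norm_def restrict[symmetric]
    by (intro sum.cong) (auto simp: c'_def lq_norm_def)
  also have "\<dots> \<le> (\<Sum>i\<in>L. lq_norm q (m i) (c i) + lq_norm q (m i) (a i))"
    unfolding lq_norm_eq_lq_norm_on using q by (intro sum_mono lq_norm_on_triangle) auto
  finally have "mixed_norm q m n c
      \<le> (\<Sum>i\<in>L. lq_norm q (m i) (c i)) + (\<Sum>i\<in>L. lq_norm q (m i) (a i))"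
    by (simp add: sum.distrib)
  moreover have "mixed_norm q m n c
      = (\<Sum>i\<in>L. lq_norm q (m i) (c i)) + (\<Sum>l\<in>{..<n}-L. lq_norm q (m l) (c l))"
    unfolding mixed_norm_def using sum.subset_diff[OF L] by (simp add: add.commute)
  ultimately show ?thesis
    by linarith
qed

lemma off_support_mass_le_residual:
  fixes b :: "nat \<Rightarrow> nat \<Rightarrow> 'a::euclidean_space"
  assumes q: "q \<ge> 1" and ok: "intra_rip_ok q b m n e" and e: "e \<le> 1"
    and L: "L \<subseteq> {..<n}" and x: "\<forall>i\<in>L. x i \<in> blk_subspace b m i"
    and opt: "optimal_lq_l1 q b m n (\<Sum>i\<in>L. x i) c"
  shows "sqrt (1 - e) * (\<Sum>l\<in>{..<n}-L. lq_norm q (m l) (c l))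
    \<le> (\<Sum>i\<in>L. norm (x i - (\<Sum>j<m i. c i j *\<^sub>R b i j)))"
proof -
  define r where "r i = x i - (\<Sum>j<m i. c i j *\<^sub>R b i j)" for i
  have "\<forall>i\<in>L. \<exists>a. r i = (\<Sum>j<m i. a j *\<^sub>R b i j) \<and> (1 - e) * (lq_norm q (m i) a)\<^sup>2 \<le> (norm (r i))\<^sup>2"
  proof
    fix i
    assume i: "i \<in> L"
    have "i < n"
      using i L by blast
    moreover have "r i \<in> blk_subspace b m i"
      unfolding r_def using x i
      by (intro subspace_diff[OF subspace_blk_subspace] block_comb_in_blk_subspace) auto
    ultimately obtain a where "r i = (\<Sum>j<m i. a j *\<^sub>R b i j)"
      "(1 - e) * (lq_norm q (m i) a)\<^sup>2 \<le> (norm (r i))\<^sup>2"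
      by (rule intra_rip_ok_block_repr[OF ok])
    then show "\<exists>a. r i = (\<Sum>j<m i. a j *\<^sub>R b i j) \<and> (1 - e) * (lq_norm q (m i) a)\<^sup>2 \<le> (norm (r i))\<^sup>2"
      by blast
  qed
  then obtain a where a: "\<forall>i\<in>L. r i = (\<Sum>j<m i. a i j *\<^sub>R b i j) \<and>
      (1 - e) * (lq_norm q (m i) (a i))\<^sup>2 \<le> (norm (r i))\<^sup>2"
    by (auto dest!: bchoice)
  have "(\<Sum>i\<in>L. x i) = (\<Sum>i\<in>L. \<Sum>j<m i. (c i j + a i j) *\<^sub>R b i j)"
  proof (intro sum.cong refl)
    fix i
    assume "i \<in> L"
    then have "x i - (\<Sum>j<m i. c i j *\<^sub>R b i j) = (\<Sum>j<m i. a i j *\<^sub>R b i j)"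
      using a unfolding r_def by blast
    then show "x i = (\<Sum>j<m i. (c i j + a i j) *\<^sub>R b i j)"
      by (simp add: scaleR_add_left sum.distrib diff_eq_eq add.commute)
  qed
  then have "sqrt (1 - e) * (\<Sum>l\<in>{..<n}-L. lq_norm q (m l) (c l))
      \<le> sqrt (1 - e) * (\<Sum>i\<in>L. lq_norm q (m i) (a i))"
    using e by (intro mult_left_mono optimal_off_support_le_correction[OF q opt L]) auto
  also have "\<dots> \<le> (\<Sum>i\<in>L. norm (r i))"
    unfolding sum_distrib_left
  proof (rule sum_mono)
    fix i
    assume "i \<in> L"
    then have "sqrt ((1 - e) * (lq_norm q (m i) (a i))\<^sup>2) \<le> sqrt ((norm (r i))\<^sup>2)"
      using a real_sqrt_le_mono by blast
    then show "sqrt (1 - e) * lq_norm q (m i) (a i) \<le> norm (r i)"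
      by (simp add: real_sqrt_mult lq_norm_eq_lq_norm_on lq_norm_on_nonneg)
  qed
  finally show ?thesis
    by (simp add: r_def)
qed

lemma residual_le_by_coherence:
  fixes b :: "nat \<Rightarrow> nat \<Rightarrow> 'a::euclidean_space"
  assumes q: "q > 0" and unit: "\<forall>i<n. \<forall>j<m i. norm (b i j) = 1"
    and nonempty: "\<forall>i<n. 0 < m i" and k: "k < n"
    and L: "L \<subseteq> {..<n}" "card L = k" and x: "\<forall>i\<in>L. x i \<in> blk_subspace b m i"
    and y: "dict_mult b m n c = (\<Sum>i\<in>L. x i)"
  shows "(1 - cum_coh b m n (k - 1)) * (\<Sum>i\<in>L. norm (x i - (\<Sum>j<m i. c i j *\<^sub>R b i j)))
    \<le> cum_coh b m n k * sqrt (1 + upper_intra_rip q b m n) * (\<Sum>l\<in>{..<n}-L. lq_norm q (m l) (c l))"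
proof -
  define v where "v i = (\<Sum>j<m i. c i j *\<^sub>R b i j)" for i
  define T where "T = (\<Sum>i\<in>L. norm (x i - v i))"
  have coh: "\<forall>i<n. \<forall>j<n. 0 \<le> sub_coh b m i j"
    using sub_coh_nonneg[OF unit nonempty] by blast
  have "(\<Sum>i\<in>L. x i) = (\<Sum>l\<in>{..<n}-L. v l) + (\<Sum>i\<in>L. v i)"
    unfolding y[symmetric] dict_mult_def v_def using sum.subset_diff[OF L(1)] by blast
  then have "(\<Sum>l\<in>{..<n}-L. v l) = (\<Sum>i\<in>L. x i - v i)"
    by (simp add: sum_subtractf eq_diff_eq)
  moreover have "\<forall>i\<in>L. x i - v i \<in> blk_subspace b m i"
    using x unfolding v_def
    by (intro ballI subspace_diff[OF subspace_blk_subspace] block_comb_in_blk_subspace) auto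
  moreover have "\<forall>l\<in>{..<n}-L. v l \<in> blk_subspace b m l"
    unfolding v_def using block_comb_in_blk_subspace by blast
  ultimately have "T \<le> cum_coh b m n k * (\<Sum>l\<in>{..<n}-L. norm (v l)) + cum_coh b m n (k - 1) * T"
    unfolding T_def by (intro sum_norm_le_cum_coh[OF L subset_refl coh])
  also have "cum_coh b m n k * (\<Sum>l\<in>{..<n}-L. norm (v l))
      \<le> cum_coh b m n k * (sqrt (1 + upper_intra_rip q b m n) * (\<Sum>l\<in>{..<n}-L. lq_norm q (m l) (c l)))"
    unfolding sum_distrib_left v_def using cum_coh_nonneg[OF coh k]
    by (intro mult_left_mono sum_mono norm_block_le_upper_intra_rip[OF q unit]) auto
  finally show ?thesis
    unfolding T_def[symmetric] v_def[symmetric] by (simp add: left_diff_distrib mult.assoc)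
qed

lemma off_support_mass_forces_rip_bound:
  fixes b :: "nat \<Rightarrow> nat \<Rightarrow> 'a::euclidean_space"
  assumes q: "q \<ge> 1" and unit: "\<forall>i<n. \<forall>j<m i. norm (b i j) = 1"
    and nonempty: "\<forall>i<n. 0 < m i" and k: "k < n"
    and L: "L \<subseteq> {..<n}" "card L = k" and x: "\<forall>i\<in>L. x i \<in> blk_subspace b m i"
    and opt: "optimal_lq_l1 q b m n (\<Sum>i\<in>L. x i) c"
    and mass: "0 < (\<Sum>l\<in>{..<n}-L. lq_norm q (m l) (c l))"
    and coh: "cum_coh b m n (k - 1) \<le> 1"
    and ok: "intra_rip_ok q b m n e" and e: "e \<le> 1"
  shows "(1 - e) * (1 - cum_coh b m n (k - 1))\<^sup>2
    \<le> (1 + upper_intra_rip q b m n) * (cum_coh b m n k)\<^sup>2"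
proof -
  define C where "C = (\<Sum>l\<in>{..<n}-L. lq_norm q (m l) (c l))"
  define T where "T = (\<Sum>i\<in>L. norm (x i - (\<Sum>j<m i. c i j *\<^sub>R b i j)))"
  define z where "z = cum_coh b m n k"
  define z' where "z' = cum_coh b m n (k - 1)"
  define sig where "sig = upper_intra_rip q b m n"
  have q0: "q > 0" and n0: "0 < n"
    using q k by auto
  have "0 \<le> sig"
    unfolding sig_def using upper_intra_rip_nonneg[OF q0 unit n0] nonempty n0 by simp
  have y: "dict_mult b m n c = (\<Sum>i\<in>L. x i)"
    using opt unfolding optimal_lq_l1_def by simp
  have "sqrt (1 - e) * C \<le> T"
    unfolding C_def T_def by (rule off_support_mass_le_residual[OF q ok e L(1) x opt])
  then have "((1 - z') * sqrt (1 - e)) * C \<le> (1 - z') * T"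
    using coh unfolding z'_def by (simp add: mult.assoc mult_left_mono)
  also have "\<dots> \<le> (z * sqrt (1 + sig)) * C"
    unfolding C_def T_def z_def z'_def sig_def
    by (rule residual_le_by_coherence[OF q0 unit nonempty k L x y])
  finally have "(1 - z') * sqrt (1 - e) \<le> z * sqrt (1 + sig)"
    using mass unfolding C_def by (rule mult_right_le_imp_le)
  then have "((1 - z') * sqrt (1 - e))\<^sup>2 \<le> (z * sqrt (1 + sig))\<^sup>2"
    using e coh unfolding z'_def by (intro power_mono) auto
  then show ?thesis
    using e \<open>0 \<le> sig\<close> unfolding z_def z'_def sig_def by (simp add: power_mult_distrib mult.commute)
qed

lemma optimal_lq_l1_vanishes_off_support:
  fixes b :: "nat \<Rightarrow> nat \<Rightarrow> 'a::euclidean_space"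
  assumes q: "q \<ge> 1" and unit: "\<forall>i<n. \<forall>j<m i. norm (b i j) = 1"
    and nonempty: "\<forall>i<n. 0 < m i" and k: "k < n"
    and L: "L \<subseteq> {..<n}" "card L = k" and x: "\<forall>i\<in>L. x i \<in> blk_subspace b m i"
    and opt: "optimal_lq_l1 q b m n (\<Sum>i\<in>L. x i) c"
    and cond: "sqrt ((1 + upper_intra_rip q b m n) / (1 + intra_rip q b m n)) * cum_coh b m n k
               + cum_coh b m n (k - 1) < (1 - intra_rip q b m n) / (1 + intra_rip q b m n)"
  shows "(\<Sum>l\<in>{..<n}-L. lq_norm q (m l) (c l)) = 0"
proof (rule ccontr)
  define eps where "eps = intra_rip q b m n"
  define sig where "sig = upper_intra_rip q b m n"
  define z where "z = cum_coh b m n k"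
  define z' where "z' = cum_coh b m n (k - 1)"
  assume "(\<Sum>l\<in>{..<n}-L. lq_norm q (m l) (c l)) \<noteq> 0"
  moreover have "0 \<le> (\<Sum>l\<in>{..<n}-L. lq_norm q (m l) (c l))"
    by (intro sum_nonneg) (simp add: lq_norm_eq_lq_norm_on lq_norm_on_nonneg)
  ultimately have mass: "0 < (\<Sum>l\<in>{..<n}-L. lq_norm q (m l) (c l))"
    by simp
  have q0: "q > 0" and n0: "0 < n"
    using q k by auto
  have coh: "\<forall>i<n. \<forall>j<n. 0 \<le> sub_coh b m i j"
    using sub_coh_nonneg[OF unit nonempty] by blast
  have "0 \<le> eps" "0 \<le> sig" "0 \<le> z" "0 \<le> z'"
    unfolding eps_def sig_def z_def z'_def
    using intra_rip_nonneg[OF q0 unit n0] upper_intra_rip_nonneg[OF q0 unit n0]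
      cum_coh_nonneg[OF coh] nonempty n0 k by simp_all
  from recovery_condition_bounds[OF this] cond
  have bounds: "z' < 1" "(1 + sig) * z\<^sup>2 < (1 - eps) * (1 - z')\<^sup>2"
    unfolding eps_def sig_def z_def z'_def by auto
  have "1 - (1 + sig) * z\<^sup>2 / (1 - z')\<^sup>2 \<le> eps"
    unfolding eps_def
  proof (rule le_intra_rip[OF q0 unit])
    fix e
    assume ok: "intra_rip_ok q b m n e"
    show "1 - (1 + sig) * z\<^sup>2 / (1 - z')\<^sup>2 \<le> e"
    proof (cases "e \<le> 1")
      case True
      then have "(1 - e) * (1 - z')\<^sup>2 \<le> (1 + sig) * z\<^sup>2"
        using off_support_mass_forces_rip_bound[OF q unit nonempty k L x opt mass _ ok] bounds
        unfolding sig_def z_def z'_def by simp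
      then show ?thesis
        using bounds by (simp add: field_simps)
    next
      case False
      have "0 \<le> (1 + sig) * z\<^sup>2 / (1 - z')\<^sup>2"
        using \<open>0 \<le> sig\<close> by simp
      then show ?thesis
        using False by linarith
    qed
  qed
  then have "(1 - eps) * (1 - z')\<^sup>2 \<le> (1 + sig) * z\<^sup>2"
    using bounds by (simp add: field_simps)
  then show False
    using bounds by linarith
qed

theorem proposition3:
  fixes b :: "nat \<Rightarrow> nat \<Rightarrow> 'a::euclidean_space" and m :: "nat \<Rightarrow> nat" and n k :: nat and q :: real
  assumes q: "q \<ge> 1"
    and k: "0 < k" "k < n"
    and blocks_nonempty: "\<forall>i<n. 0 < m i"
    and unit_cols: "\<forall>i<n. \<forall>j<m i. norm (b i j) = 1"
    and indep: "\<forall>i<n. \<forall>i'<n. i \<noteq> i' \<longrightarrow> blk_subspace b m i \<inter> blk_subspace b m i' = {0}"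
    and uniq: "unique_block_sparse b m n k"
    and cond: "sqrt ((1 + upper_intra_rip q b m n) / (1 + intra_rip q b m n)) * cum_coh b m n k
               + cum_coh b m n (k - 1) < (1 - intra_rip q b m n) / (1 + intra_rip q b m n)"
  shows "\<forall>L. L \<subseteq> {..<n} \<and> card L = k \<longrightarrow>
           (\<forall>y x. (\<forall>i\<in>L. x i \<in> blk_subspace b m i) \<and> y = (\<Sum>i\<in>L. x i) \<longrightarrow>
              (\<forall>c. optimal_lq_l1 q b m n y c \<longrightarrow> (\<forall>i<n. i \<notin> L \<longrightarrow> (\<forall>j<m i. c i j = 0))))"
proof (intro allI impI)
  fix L y x c l j
  assume L: "L \<subseteq> {..<n} \<and> card L = k"
    and yx: "(\<forall>i\<in>L. x i \<in> blk_subspace b m i) \<and> y = (\<Sum>i\<in>L. x i)"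
    and opt: "optimal_lq_l1 q b m n y c" and l: "l < n" "l \<notin> L" and j: "j < m l"
  have "(\<Sum>l\<in>{..<n}-L. lq_norm q (m l) (c l)) = 0"
    using optimal_lq_l1_vanishes_off_support[OF q unit_cols blocks_nonempty k(2) _ _ _ _ cond]
      L yx opt by blast
  then have "lq_norm q (m l) (c l) = 0"
    using l by (simp add: sum_nonneg_eq_0_iff lq_norm_eq_lq_norm_on lq_norm_on_nonneg)
  then show "c l j = 0"
    using lq_norm_on_eq_0_iff[of "{..<m l}" q "c l"] q j by (simp add: lq_norm_eq_lq_norm_on)
qed

end
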